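(* Let $G$ be a connected graph with vertex set $\{u_1,\dots,u_n\}$, $n\ge2$, and let $\mathcal{H}=\{H_1,\dots,H_n\}$ be a family of connected graphs such that each $H_i$ either has radius $r(H_i)\ge4$, or is not a tree and has girth $\mathtt{g}(H_i)\ge7$. Then $$\dim_l(G\circ\mathcal{H})=\sum_{i=1}^n\dim_l(K_1+H_i)=\sum_{i=1}^n\operatorname{adim}_l(H_i).$$
   Context: All graphs are finite and simple. $d_G$ is shortest-path distance, $d_{G,2}=\min\{d_G,2\}$; $s$ distinguishes $x,y$ w.r.t. $d$ if $d(s,x)\ne d(s,y)$. $\dim_l(G)$ (connected $G$): minimum size of $S\subseteq V(G)$ such that any two adjacent vertices are distinguished w.r.t. $d_G$ by some vertex of $S$. $\operatorname{adim}_l(H)$: minimum size of $S\subseteq V(H)$ such that any two adjacent vertices are distinguished w.r.t. $d_{H,2}$ by some vertex of $S$. $K_1+H$: a new vertex joined to every vertex of $H$. Lexicographic product $G\circ\mathcal{H}$: vertex set $\bigcup_i\{u_i\}\times V(H_i)$, $(u_i,v)\sim(u_j,w)$ iff $u_iu_j\in E(G)$, or $i=j$ and $vw\in E(H_i)$. *)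

theory Defs
  imports Main "HOL-Library.Extended_Nat"
begin

record 'a graph =
  verts :: "'a set"
  edges :: "'a set set"

definition simple_graph :: "'a graph \<Rightarrow> bool" where
  "simple_graph G \<longleftrightarrow> finite (verts G) \<and>
     (\<forall>e\<in>edges G. \<exists>u v. e = {u, v} \<and> u \<noteq> v \<and> u \<in> verts G \<and> v \<in> verts G)"

definition adj :: "'a graph \<Rightarrow> 'a \<Rightarrow> 'a \<Rightarrow> bool" where
  "adj G u v \<longleftrightarrow> {u, v} \<in> edges G"

definition walk :: "'a graph \<Rightarrow> 'a list \<Rightarrow> bool" where
  "walk G xs \<longleftrightarrow> xs \<noteq> [] \<and> set xs \<subseteq> verts G \<and>
     (\<forall>i. Suc i < length xs \<longrightarrow> adj G (xs ! i) (xs ! Suc i))"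

definition connected :: "'a graph \<Rightarrow> bool" where
  "connected G \<longleftrightarrow> verts G \<noteq> {} \<and>
     (\<forall>u\<in>verts G. \<forall>v\<in>verts G. \<exists>xs. walk G xs \<and> hd xs = u \<and> last xs = v)"

(* shortest-path distance d_G (meaningful for connected G) *)
definition dist :: "'a graph \<Rightarrow> 'a \<Rightarrow> 'a \<Rightarrow> nat" where
  "dist G u v = (LEAST n. \<exists>xs. walk G xs \<and> hd xs = u \<and> last xs = v \<and> length xs = Suc n)"

definition dist2 :: "'a graph \<Rightarrow> 'a \<Rightarrow> 'a \<Rightarrow> nat" where
  "dist2 G u v = min (dist G u v) 2"

definition local_gen :: "('a \<Rightarrow> 'a \<Rightarrow> nat) \<Rightarrow> 'a graph \<Rightarrow> 'a set \<Rightarrow> bool" where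
  "local_gen d G S \<longleftrightarrow> S \<subseteq> verts G \<and>
     (\<forall>x\<in>verts G. \<forall>y\<in>verts G. adj G x y \<longrightarrow> (\<exists>s\<in>S. d s x \<noteq> d s y))"

definition dim_l :: "'a graph \<Rightarrow> nat" where
  "dim_l G = (LEAST k. \<exists>S. local_gen (dist G) G S \<and> card S = k)"

definition adim_l :: "'a graph \<Rightarrow> nat" where
  "adim_l G = (LEAST k. \<exists>S. local_gen (dist2 G) G S \<and> card S = k)"

(* K_1 + H : the new vertex is None, old vertices are Some v *)
definition join1 :: "'a graph \<Rightarrow> 'a option graph" where
  "join1 H = \<lparr> verts = insert None (Some ` verts H),
               edges = ((\<lambda>e. Some ` e) ` edges H) \<union> {{None, Some v} | v. v \<in> verts H} \<rparr>"

(* lexicographic product G \<circ> H, the family H indexed by the vertices of G *)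
definition lex_prod :: "'a graph \<Rightarrow> ('a \<Rightarrow> 'b graph) \<Rightarrow> ('a \<times> 'b) graph" where
  "lex_prod G H = \<lparr> verts = Sigma (verts G) (\<lambda>u. verts (H u)),
     edges = {{(u, x), (w, y)} | u x w y.
                u \<in> verts G \<and> w \<in> verts G \<and> x \<in> verts (H u) \<and> y \<in> verts (H w) \<and>
                (adj G u w \<or> (u = w \<and> adj (H u) x y))} \<rparr>"

definition ecc :: "'a graph \<Rightarrow> 'a \<Rightarrow> nat" where
  "ecc G v = Max (dist G v ` verts G)"

definition radius :: "'a graph \<Rightarrow> nat" where
  "radius G = Min (ecc G ` verts G)"

definition cycle :: "'a graph \<Rightarrow> 'a list \<Rightarrow> bool" where
  "cycle G c \<longleftrightarrow> length c \<ge> 3 \<and> distinct c \<and> walk G c \<and> adj G (last c) (hd c)"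

definition is_tree :: "'a graph \<Rightarrow> bool" where
  "is_tree G \<longleftrightarrow> connected G \<and> \<not> (\<exists>c. cycle G c)"

(* girth: length of a shortest cycle, infinity if acyclic *)
definition girth :: "'a graph \<Rightarrow> enat" where
  "girth G = (INF c \<in> {c. cycle G c}. enat (length c))"

end

theory Submission
  imports Defs
begin

text \<open>In \<open>lex_prod G H\<close> a vertex \<open>(v, z)\<close> is at distance \<open>dist G v w\<close> from every vertex
  \<open>(w, y)\<close> of another fibre and at distance \<open>dist2 (H v) z y\<close> from every vertex \<open>(v, y)\<close> of its
  own fibre, because two non-adjacent vertices of a fibre are joined through a neighbouring fibre;
  in \<open>join1 H\<close> the apex plays the role of the other fibres. Hence every local metric generator of
  either graph restricts, fibre by fibre, to local adjacency generators of the factors, which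
  gives the lower bounds. Conversely, a union of local adjacency bases of the factors distinguishes
  the ends of every edge inside a fibre, and also those of an edge between fibres (or to the apex)
  as soon as no such basis lies in the neighbourhood of a single vertex \<open>x\<close>. The radius and girth
  hypotheses both yield an edge \<open>ab\<close> with both ends at distance at least 3 from \<open>x\<close> (for girth
  at least 7, at a vertex of a cycle farthest from \<open>x\<close>), and no neighbour of \<open>x\<close> distinguishes
  \<open>a\<close> from \<open>b\<close> with respect to the truncated distance.\<close>

lemma adj_commute: "adj G u v \<longleftrightarrow> adj G v u"
  by (simp add: adj_def insert_commute)

lemma walk_singleton [simp]: "walk G [a] \<longleftrightarrow> a \<in> verts G"
  by (auto simp: walk_def)

lemma walk_Cons_Cons [simp]:
  "walk G (a # b # xs) \<longleftrightarrow> a \<in> verts G \<and> adj G a b \<and> walk G (b # xs)"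
  by (auto simp: walk_def nth_Cons less_Suc_eq_0_disj split: nat.splits)

lemma walk_append:
  "xs \<noteq> [] \<Longrightarrow> ys \<noteq> [] \<Longrightarrow>
     walk G (xs @ ys) \<longleftrightarrow> walk G xs \<and> walk G ys \<and> adj G (last xs) (hd ys)"
proof (induction xs rule: induct_list012)
  case (3 a b xs)
  then show ?case by (cases ys) auto
qed (auto simp: neq_Nil_conv)

lemma walk_map:
  assumes "walk G ws" "\<And>a. a \<in> verts G \<Longrightarrow> f a \<in> verts G'"
    "\<And>a b. adj G a b \<Longrightarrow> a \<in> verts G \<Longrightarrow> b \<in> verts G \<Longrightarrow> adj G' (f a) (f b)"
  shows "walk G' (map f ws)"
  using assms(1)
proof (induction ws rule: induct_list012)
  case (3 a b ws)
  then have "b \<in> verts G" by (simp add: walk_def)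
  with 3 show ?case by (simp add: assms(2,3))
qed (auto simp: assms(2) walk_def)

lemma dist_le_walk:
  assumes "walk G xs" "hd xs = u" "last xs = v"
  shows "dist G u v \<le> length xs - 1"
proof -
  have "length xs = Suc (length xs - 1)"
    using assms(1) by (cases xs) (auto simp: walk_def)
  then show ?thesis
    unfolding dist_def using assms by (intro Least_le) blast
qed

lemma shortest_walk:
  assumes "walk G xs" "hd xs = u" "last xs = v"
  shows "\<exists>ys. walk G ys \<and> hd ys = u \<and> last ys = v \<and> length ys = Suc (dist G u v)"
proof -
  have "length xs = Suc (length xs - 1)"
    using assms(1) by (cases xs) (auto simp: walk_def)
  then have "\<exists>n ys. walk G ys \<and> hd ys = u \<and> last ys = v \<and> length ys = Suc n"
    using assms by blast
  then show ?thesis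
    unfolding dist_def by (rule LeastI_ex)
qed

lemma walk_potential_le:
  assumes "walk G xs" and lipschitz: "\<And>p q. adj G p q \<Longrightarrow> D q \<le> D p + (1::nat)"
  shows "D (last xs) \<le> D (hd xs) + (length xs - 1)"
  using assms(1)
proof (induction xs rule: induct_list012)
  case (3 a b xs)
  then show ?case using lipschitz[of a b] by simp
qed (auto simp: walk_def)

text \<open>Distances are computed by exhibiting a walk and a 1-Lipschitz potential that vanishes at
  the start: the walk bounds the distance from above, the potential from below.\<close>

lemma dist_eqI:
  assumes "walk G xs" "hd xs = u" "last xs = v" "length xs = Suc (D v)" "D u = 0"
    and lipschitz: "\<And>p q. adj G p q \<Longrightarrow> D q \<le> D p + (1::nat)"
  shows "dist G u v = D v"
proof -
  obtain ys where ys: "walk G ys" "hd ys = u" "last ys = v" "length ys = Suc (dist G u v)"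
    using shortest_walk[OF assms(1-3)] by blast
  have "D v \<le> dist G u v"
    using walk_potential_le[of G ys D] lipschitz ys assms(5) by simp
  moreover have "dist G u v \<le> D v"
    using dist_le_walk[OF assms(1-3)] assms(4) by simp
  ultimately show ?thesis by simp
qed

lemma dist_adj_eq_1:
  assumes "adj G u v" "u \<noteq> v" "u \<in> verts G" "v \<in> verts G"
  shows "dist G u v = 1"
  using dist_eqI[of G "[u, v]" u v "\<lambda>p. if p = u then 0 else 1"] assms by auto

lemma dist_eq_0D:
  assumes "walk G xs" "hd xs = u" "last xs = v" "dist G u v = 0"
  shows "u = v"
  using shortest_walk[OF assms(1-3)] assms(4) by (auto simp: length_Suc_conv)

lemma dist_eq_1D:
  assumes "walk G xs" "hd xs = u" "last xs = v" "dist G u v = 1"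
  shows "adj G u v"
  using shortest_walk[OF assms(1-3)] assms(4) by (auto simp: length_Suc_conv)

lemma cycle_length_ge_girth: "cycle G c \<Longrightarrow> girth G \<le> enat (length c)"
  unfolding girth_def by (rule INF_lower) simp

lemma cycle_length_ge_7:
  assumes "7 \<le> girth G" "cycle G c"
  shows "7 \<le> length c"
proof -
  have "(7::enat) \<le> enat (length c)"
    using assms cycle_length_ge_girth order_trans by blast
  then show ?thesis by (simp add: numeral_eq_enat)
qed

locale connected_simple_graph =
  fixes G :: "'a graph"
  assumes simple: "simple_graph G" and connected: "connected G"
begin

lemma finite_verts: "finite (verts G)"
  using simple by (simp add: simple_graph_def)

lemma verts_nonempty: "verts G \<noteq> {}"
  using connected by (simp add: connected_def)

lemma adj_in_verts:
  assumes "adj G u v"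
  shows "u \<in> verts G" "v \<in> verts G"
  using simple assms unfolding simple_graph_def adj_def by (auto simp: doubleton_eq_iff)

lemma adj_irrefl [simp]: "\<not> adj G u u"
  using simple unfolding simple_graph_def adj_def by (auto simp: doubleton_eq_iff)

lemma walk_exists: "u \<in> verts G \<Longrightarrow> v \<in> verts G \<Longrightarrow> \<exists>xs. walk G xs \<and> hd xs = u \<and> last xs = v"
  using connected unfolding connected_def by blast

lemma shortest_walk_exists:
  assumes "u \<in> verts G" "v \<in> verts G"
  shows "\<exists>ys. walk G ys \<and> hd ys = u \<and> last ys = v \<and> length ys = Suc (dist G u v)"
proof -
  obtain xs where "walk G xs" "hd xs = u" "last xs = v"
    using walk_exists[OF assms] by blast
  then show ?thesis
    by (rule shortest_walk)
qed

lemma dist_eq_0_iff: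
  assumes "u \<in> verts G" "v \<in> verts G"
  shows "dist G u v = 0 \<longleftrightarrow> u = v"
proof -
  obtain xs where "walk G xs" "hd xs = u" "last xs = v"
    using walk_exists[OF assms] by blast
  then show ?thesis
    using dist_eq_0D dist_le_walk[of G "[u]" u u] assms(1) by fastforce
qed

lemma dist_self [simp]: "x \<in> verts G \<Longrightarrow> dist G x x = 0"
  using dist_eq_0_iff by blast

lemma dist_eq_1_iff:
  assumes "u \<in> verts G" "v \<in> verts G"
  shows "dist G u v = 1 \<longleftrightarrow> adj G u v"
proof -
  obtain xs where xs: "walk G xs" "hd xs = u" "last xs = v"
    using walk_exists[OF assms] by blast
  show ?thesis
    using dist_eq_1D[OF xs] dist_adj_eq_1[of G u v] dist_eq_0_iff[OF assms] assms
    by (cases "u = v") auto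
qed

lemma adj_if_dist_eq_1: "x \<in> verts G \<Longrightarrow> y \<in> verts G \<Longrightarrow> dist G x y = 1 \<Longrightarrow> adj G x y"
  using dist_eq_1_iff by blast

lemma dist_triangle:
  assumes "u \<in> verts G" "v \<in> verts G" "w \<in> verts G"
  shows "dist G u w \<le> dist G u v + dist G v w"
proof -
  obtain xs where xs: "walk G xs" "hd xs = u" "last xs = v" "length xs = Suc (dist G u v)"
    using shortest_walk_exists[OF assms(1,2)] by blast
  obtain ys where ys: "walk G ys" "hd ys = v" "last ys = w" "length ys = Suc (dist G v w)"
    using shortest_walk_exists[OF assms(2,3)] by blast
  show ?thesis
  proof (cases ys rule: remdups_adj.cases)
    case (2 a)
    then show ?thesis using xs ys by simp
  next
    case (3 a b zs)
    have "xs \<noteq> []"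
      using xs(1) by (simp add: walk_def)
    then have "walk G (xs @ b # zs)"
      using walk_append[of xs "b # zs" G] xs(1,3) ys(1,2) 3 by simp
    then show ?thesis
      using dist_le_walk[of G "xs @ b # zs" u w] \<open>xs \<noteq> []\<close> xs ys 3 by simp
  qed (use ys in \<open>simp add: walk_def\<close>)
qed

lemma dist_adj_le_Suc: "adj G v w \<Longrightarrow> u \<in> verts G \<Longrightarrow> dist G u w \<le> Suc (dist G u v)"
  using dist_triangle[of u v w] dist_eq_1_iff[of v w] adj_in_verts by simp

lemma dist_Suc_predecessor:
  assumes "x \<in> verts G" "w \<in> verts G" "dist G x w = Suc m"
  obtains p where "adj G p w" "dist G x p = m"
proof -
  obtain ys where ys: "walk G ys" "hd ys = x" "last ys = w" "length ys = Suc (Suc m)"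
    using shortest_walk_exists[OF assms(1,2)] assms(3) by auto
  define p where "p = last (butlast ys)"
  have split: "ys = butlast ys @ [w]" "butlast ys \<noteq> []"
    using ys by (cases ys rule: rev_cases; auto)+
  then have "walk G (butlast ys)" "adj G p w"
    using ys(1) walk_append[of "butlast ys" "[w]" G] by (auto simp: p_def)
  moreover have "hd (butlast ys) = x"
    using split ys(2) by (metis hd_append2)
  ultimately have "dist G x p \<le> m"
    using dist_le_walk[of G "butlast ys" x p] ys(4) by (simp add: p_def)
  moreover have "Suc m \<le> Suc (dist G x p)"
    using dist_adj_le_Suc[OF \<open>adj G p w\<close> assms(1)] assms(3) by simp
  ultimately show ?thesis
    using that \<open>adj G p w\<close> by simp
qed

lemma dist2_eq:
  "z \<in> verts G \<Longrightarrow> x \<in> verts G \<Longrightarrow>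
     dist2 G z x = (if z = x then 0 else if adj G z x then 1 else 2)"
  using dist_eq_0_iff[of z x] dist_eq_1_iff[of z x] by (cases "z = x") (auto simp: dist2_def)

lemma has_neighbour:
  assumes "2 \<le> card (verts G)" "u \<in> verts G"
  obtains w where "adj G u w"
proof -
  have "\<not> verts G \<subseteq> {u}"
    using assms(1) card_mono[of "{u}" "verts G"] by auto
  then obtain v where v: "v \<in> verts G" "v \<noteq> u"
    by blast
  obtain xs where xs: "walk G xs" "hd xs = u" "last xs = v"
    using walk_exists[OF assms(2) v(1)] by blast
  then obtain w ys where "xs = u # w # ys"
    using v(2) by (cases xs rule: remdups_adj.cases) (auto simp: walk_def)
  then show ?thesis
    using that xs(1) by auto
qed

lemma cycle_two_neighbours:
  assumes "cycle G c" "v \<in> set c"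
  obtains a b where "a \<in> set c" "b \<in> set c" "a \<noteq> b" "adj G v a" "adj G v b"
proof -
  define n where "n = length c"
  have n: "3 \<le> n" and "distinct c"
    using assms(1) by (auto simp: cycle_def n_def)
  have succ_adj: "adj G (c ! j) (c ! (Suc j mod n))" if "j < n" for j
  proof (cases "Suc j < n")
    case True
    then show ?thesis using assms(1) by (simp add: cycle_def walk_def n_def)
  next
    case False
    then have "Suc j = n" using that by simp
    then have "j = n - 1" "Suc j mod n = 0" by auto
    moreover have "c \<noteq> []" using n by (auto simp: n_def)
    ultimately show ?thesis
      using assms(1) by (simp add: cycle_def n_def hd_conv_nth last_conv_nth)
  qed
  obtain i where i: "i < n" "c ! i = v"
    using assms(2) by (auto simp: in_set_conv_nth n_def)
  define j where "j = (if i = 0 then n - 1 else i - 1)"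
  have j: "j < n" "Suc j mod n = i"
    using i n by (auto simp: j_def mod_Suc)
  have i': "Suc i mod n \<noteq> j" "Suc i mod n < n"
    using i n by (auto simp: j_def mod_Suc)
  then have "c ! (Suc i mod n) \<noteq> c ! j"
    using nth_eq_iff_index_eq[OF \<open>distinct c\<close>, of "Suc i mod n" j] j(1) by (simp add: n_def)
  moreover have "adj G v (c ! (Suc i mod n))" "adj G v (c ! j)"
    using succ_adj[OF i(1)] succ_adj[OF j(1)] i j adj_commute by metis+
  moreover have "c ! (Suc i mod n) \<in> set c" "c ! j \<in> set c"
    using i'(2) j(1) by (simp_all add: n_def)
  ultimately show ?thesis
    using that by blast
qed

text \<open>Under girth at least 7, an edge inside one of the first two distance levels around \<open>x\<close>,
  or two parents of one vertex in the first three levels, would close a cycle of length at most 6.\<close>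

lemma level_edge_far:
  assumes girth: "7 \<le> girth G" and x: "x \<in> verts G"
    and pq: "adj G p q" "dist G x p = dist G x q"
  shows "3 \<le> dist G x p"
proof -
  have V: "p \<in> verts G" "q \<in> verts G"
    using adj_in_verts[OF pq(1)] by auto
  have no_cycle: "\<not> cycle G c" if "length c \<le> 6" for c
    using cycle_length_ge_7[OF girth] that by fastforce
  consider "dist G x p = 0" | "dist G x p = 1" | "dist G x p = 2" | "3 \<le> dist G x p"
    by linarith
  then show ?thesis
  proof cases
    case 1
    then show ?thesis
      using dist_eq_0_iff[OF x] V pq by auto
  next
    case 2
    then have "cycle G [x, p, q]"
      using pq V x adj_if_dist_eq_1[OF x] adj_commute[of G q x] by (auto simp: cycle_def)
    then show ?thesis
      using no_cycle by simp
  next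
    case 3
    obtain p' where p': "adj G p' p" "dist G x p' = 1"
      using dist_Suc_predecessor[OF x V(1)] 3 by (metis numeral_2_eq_2 One_nat_def)
    obtain q' where q': "adj G q' q" "dist G x q' = 1"
      using dist_Suc_predecessor[OF x V(2)] 3 pq(2) by (metis numeral_2_eq_2 One_nat_def)
    have V': "p' \<in> verts G" "q' \<in> verts G"
      using adj_in_verts p' q' by auto
    show ?thesis
    proof (cases "p' = q'")
      case True
      then have "cycle G [p', p, q]"
        using pq p' q' V V' 3 adj_commute[of G q q'] by (auto simp: cycle_def)
      then show ?thesis
        using no_cycle by simp
    next
      case False
      then have "cycle G [x, p', p, q, q']"
        using pq p' q' V V' x 3 adj_if_dist_eq_1[OF x] adj_commute[of G q q'] adj_commute[of G q' x]
        by (auto simp: cycle_def)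
      then show ?thesis
        using no_cycle by simp
    qed
  qed
qed

lemma two_parents_far:
  assumes girth: "7 \<le> girth G" and x: "x \<in> verts G"
    and ab: "adj G v a" "adj G v b" "a \<noteq> b"
    and dist: "dist G x a = m" "dist G x b = m" "dist G x v = Suc m"
  shows "3 \<le> m"
proof -
  have V: "a \<in> verts G" "b \<in> verts G" "v \<in> verts G"
    using adj_in_verts ab by auto
  have no_cycle: "\<not> cycle G c" if "length c \<le> 6" for c
    using cycle_length_ge_7[OF girth] that by fastforce
  consider "m = 0" | "m = 1" | "m = 2" | "3 \<le> m"
    by linarith
  then show ?thesis
  proof cases
    case 1
    then show ?thesis
      using dist_eq_0_iff[OF x] V dist ab(3) by auto
  next
    case 2
    then have "cycle G [x, a, v, b]"
      using ab V x dist adj_if_dist_eq_1[OF x] adj_commute[of G a v] adj_commute[of G b x]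
      by (auto simp: cycle_def)
    then show ?thesis
      using no_cycle by simp
  next
    case 3
    obtain a' where a': "adj G a' a" "dist G x a' = 1"
      using dist_Suc_predecessor[OF x V(1)] 3 dist by (metis numeral_2_eq_2 One_nat_def)
    obtain b' where b': "adj G b' b" "dist G x b' = 1"
      using dist_Suc_predecessor[OF x V(2)] 3 dist by (metis numeral_2_eq_2 One_nat_def)
    have V': "a' \<in> verts G" "b' \<in> verts G"
      using adj_in_verts a' b' by auto
    show ?thesis
    proof (cases "a' = b'")
      case True
      then have "cycle G [a', a, v, b]"
        using ab a' b' V V' 3 dist adj_commute[of G a v] adj_commute[of G b b']
        by (auto simp: cycle_def)
      then show ?thesis
        using no_cycle by simp
    next
      case False
      then have "cycle G [x, a', a, v, b, b']"
        using ab a' b' V V' x 3 dist adj_if_dist_eq_1[OF x] adj_commute[of G a v]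
          adj_commute[of G b b'] adj_commute[of G b' x]
        by (auto simp: cycle_def)
      then show ?thesis
        using no_cycle by simp
    qed
  qed
qed

lemma far_edge_if_cycle:
  assumes girth: "7 \<le> girth G" and c: "cycle G c" and x: "x \<in> verts G"
  obtains a b where "adj G a b" "3 \<le> dist G x a" "3 \<le> dist G x b"
proof -
  define k where "k = Max (dist G x ` set c)"
  have "set c \<noteq> {}"
    using c by (auto simp: cycle_def)
  then have "k \<in> dist G x ` set c"
    by (simp add: k_def)
  then obtain v where v: "v \<in> set c" "dist G x v = k"
    by blast
  have k_max: "dist G x w \<le> k" if "w \<in> set c" for w
    using that by (simp add: k_def)
  obtain a b where ab: "a \<in> set c" "b \<in> set c" "a \<noteq> b" "adj G v a" "adj G v b"
    using cycle_two_neighbours[OF c v(1)] by blast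
  have "adj G a v" "adj G b v"
    using ab(4,5) by (simp_all add: adj_commute)
  then have "dist G x v \<le> Suc (dist G x a)" "dist G x v \<le> Suc (dist G x b)"
    using dist_adj_le_Suc[OF _ x] by blast+
  then consider "dist G x a = dist G x v" | "dist G x b = dist G x v"
    | "dist G x a = dist G x b" "dist G x v = Suc (dist G x a)"
    using k_max[OF ab(1)] k_max[OF ab(2)] v(2) by linarith
  then show thesis
  proof cases
    case 1
    then show thesis
      using level_edge_far[OF girth x ab(4)] that[OF ab(4)] by simp
  next
    case 2
    then show thesis
      using level_edge_far[OF girth x ab(5)] that[OF ab(5)] by simp
  next
    case 3
    then show thesis
      using two_parents_far[OF girth x ab(4,5,3) refl] that[OF ab(4)] by simp
  qed
qed

lemma far_edge_if_radius:
  assumes r: "4 \<le> radius G" and x: "x \<in> verts G"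
  obtains a b where "adj G a b" "3 \<le> dist G x a" "3 \<le> dist G x b"
proof -
  have "radius G \<le> ecc G x"
    unfolding radius_def using finite_verts x by (intro Min_le) auto
  moreover have "ecc G x \<in> dist G x ` verts G"
    unfolding ecc_def using finite_verts verts_nonempty by (intro Max_in) auto
  ultimately obtain y where y: "y \<in> verts G" "4 \<le> dist G x y"
    using r by (auto simp: ecc_def)
  then obtain m where m: "dist G x y = Suc m" "3 \<le> m"
    by (cases "dist G x y") auto
  obtain p where "adj G p y" "dist G x p = m"
    using dist_Suc_predecessor[OF x y(1) m(1)] by blast
  then show thesis
    using that m by simp
qed

lemma far_edge_exists:
  assumes "4 \<le> radius G \<or> (\<not> is_tree G \<and> 7 \<le> girth G)" and "x \<in> verts G"
  obtains a b where "adj G a b" "3 \<le> dist G x a" "3 \<le> dist G x b"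
  using assms far_edge_if_radius far_edge_if_cycle connected by (metis is_tree_def)

end

lemma dim_l_le_card: "local_gen (dist G) G S \<Longrightarrow> dim_l G \<le> card S"
  unfolding dim_l_def by (rule Least_le) blast

lemma adim_l_le_card: "local_gen (dist2 G) G S \<Longrightarrow> adim_l G \<le> card S"
  unfolding adim_l_def by (rule Least_le) blast

lemma dim_l_attained:
  "local_gen (dist G) G S \<Longrightarrow> \<exists>S'. local_gen (dist G) G S' \<and> card S' = dim_l G"
  unfolding dim_l_def by (rule LeastI_ex) blast

lemma adim_l_attained:
  "local_gen (dist2 G) G S \<Longrightarrow> \<exists>S'. local_gen (dist2 G) G S' \<and> card S' = adim_l G"
  unfolding adim_l_def by (rule LeastI_ex) blast

text \<open>The radius and girth hypotheses on the factors are used only through this property.\<close>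

definition no_adj_gen_in_nbhd :: "'a graph \<Rightarrow> bool" where
  "no_adj_gen_in_nbhd G \<longleftrightarrow>
     (\<forall>S. local_gen (dist2 G) G S \<longrightarrow> (\<forall>x\<in>verts G. \<exists>s\<in>S. \<not> adj G x s))"

context connected_simple_graph
begin

lemma dist2_adj_le_Suc: "adj G y y' \<Longrightarrow> z \<in> verts G \<Longrightarrow> dist2 G z y' \<le> Suc (dist2 G z y)"
  using dist_adj_le_Suc[of y y' z] by (simp add: dist2_def)

lemma local_gen_dist2_verts: "local_gen (dist2 G) G (verts G)"
  unfolding local_gen_def using dist2_eq adj_in_verts by fastforce

lemma adj_gen_not_in_nbhd_of_far_edge:
  assumes gen: "local_gen (dist2 G) G S" and x: "x \<in> verts G"
    and ab: "adj G a b" "3 \<le> dist G x a" "3 \<le> dist G x b"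
  shows "\<exists>s\<in>S. \<not> adj G x s"
proof (rule ccontr)
  assume "\<not> ?thesis"
  then have nbhd: "adj G x s" if "s \<in> S" for s
    using that by blast
  obtain s where s: "s \<in> S" "dist2 G s a \<noteq> dist2 G s b"
    using gen ab(1) adj_in_verts[OF ab(1)] unfolding local_gen_def by blast
  have "s \<in> verts G" "a \<in> verts G" "b \<in> verts G"
    using adj_in_verts nbhd[OF s(1)] ab(1) by auto
  then have "dist G x a \<le> Suc (dist G s a)" "dist G x b \<le> Suc (dist G s b)"
    using dist_triangle[OF x] dist_eq_1_iff[OF x] nbhd[OF s(1)] by (metis plus_1_eq_Suc)+
  then show False
    using s(2) ab(2,3) by (simp add: dist2_def)
qed

lemma no_adj_gen_in_nbhdI:
  assumes "4 \<le> radius G \<or> (\<not> is_tree G \<and> 7 \<le> girth G)"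
  shows "no_adj_gen_in_nbhd G"
  unfolding no_adj_gen_in_nbhd_def
  using far_edge_exists[OF assms] adj_gen_not_in_nbhd_of_far_edge by metis

end

lemma verts_join1: "verts (join1 H) = insert None (Some ` verts H)"
  by (simp add: join1_def)

lemma adj_join1_Some_Some [simp]: "adj (join1 H) (Some x) (Some y) \<longleftrightarrow> adj H x y"
proof -
  have "inj ((`) Some)"
    by (simp add: inj_on_def inj_image_eq_iff)
  then have "{Some x, Some y} \<in> (`) Some ` edges H \<longleftrightarrow> {x, y} \<in> edges H"
    using inj_image_mem_iff[of "(`) Some" "{x, y}"] by simp
  then show ?thesis
    unfolding adj_def join1_def by (auto simp: doubleton_eq_iff)
qed

lemma adj_join1_None_Some [simp]: "adj (join1 H) None (Some y) \<longleftrightarrow> y \<in> verts H"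
  unfolding adj_def join1_def by (auto simp: doubleton_eq_iff)

lemma adj_join1_Some_None [simp]: "adj (join1 H) (Some y) None \<longleftrightarrow> y \<in> verts H"
  by (subst adj_commute) simp

lemma adj_join1_None_None [simp]: "\<not> adj (join1 H) None None"
  unfolding adj_def join1_def by auto

context connected_simple_graph
begin

lemma dist_join1_Some_None: "z \<in> verts G \<Longrightarrow> dist (join1 G) (Some z) None = 1"
  by (rule dist_adj_eq_1) (simp_all add: verts_join1)

lemma dist_join1_None_Some: "z \<in> verts G \<Longrightarrow> dist (join1 G) None (Some z) = 1"
  by (rule dist_adj_eq_1) (simp_all add: verts_join1)

lemma dist_join1_Some_Some:
  assumes z: "z \<in> verts G" and y: "y \<in> verts G"
  shows "dist (join1 G) (Some z) (Some y) = dist2 G z y"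
proof -
  define D where "D p = (case p of None \<Rightarrow> 1 | Some t \<Rightarrow> dist2 G z t)" for p
  have lipschitz: "D q \<le> D p + 1" if "adj (join1 G) p q" for p q
  proof (cases p; cases q)
    fix a b assume "p = Some a" "q = Some b"
    then show ?thesis
      using that dist2_adj_le_Suc[of a b z] z by (simp add: D_def)
  qed (use that in \<open>auto simp: D_def dist2_def\<close>)
  obtain xs where xs: "walk (join1 G) xs" "hd xs = Some z" "last xs = Some y"
    "length xs = Suc (D (Some y))"
  proof -
    consider "z = y" | "z \<noteq> y" "adj G z y" | "z \<noteq> y" "\<not> adj G z y"
      by blast
    then show thesis
    proof cases
      case 1
      then show thesis
        using z dist2_eq[OF z y] by (intro that[of "[Some z]"]) (simp_all add: verts_join1 D_def)
    next
      case 2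
      then show thesis
        using z y dist2_eq[OF z y] by (intro that[of "[Some z, Some y]"]) (simp_all add: verts_join1 D_def)
    next
      case 3
      then show thesis
        using z y dist2_eq[OF z y]
        by (intro that[of "[Some z, None, Some y]"]) (simp_all add: verts_join1 D_def)
    qed
  qed
  have "D (Some z) = 0"
    using dist2_eq[OF z z] by (simp add: D_def)
  then show ?thesis
    using dist_eqI[OF xs \<open>D (Some z) = 0\<close> lipschitz] by (simp add: D_def)
qed

lemma local_gen_join1_image:
  assumes nbhd: "no_adj_gen_in_nbhd G" and gen: "local_gen (dist2 G) G S"
  shows "local_gen (dist (join1 G)) (join1 G) (Some ` S)"
  unfolding local_gen_def
proof (intro conjI ballI impI)
  have SV: "S \<subseteq> verts G"
    using gen by (simp add: local_gen_def)
  then show "Some ` S \<subseteq> verts (join1 G)"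
    by (auto simp: verts_join1)
  have apex: "\<exists>s\<in>Some ` S. dist (join1 G) s (Some x) \<noteq> dist (join1 G) s None"
    if x: "x \<in> verts G" for x
  proof -
    obtain s where s: "s \<in> S" "\<not> adj G x s"
      using nbhd gen x unfolding no_adj_gen_in_nbhd_def by blast
    then have "s \<in> verts G" "\<not> adj G s x"
      using SV by (auto simp: adj_commute)
    then have "dist (join1 G) (Some s) (Some x) \<noteq> dist (join1 G) (Some s) None"
      using dist_join1_Some_Some[of s x] dist_join1_Some_None[of s] dist2_eq[of s x] x by auto
    then show ?thesis
      using s(1) by blast
  qed
  fix p q assume "p \<in> verts (join1 G)" "q \<in> verts (join1 G)" and pq: "adj (join1 G) p q"
  then consider x where "p = None" "q = Some x" "x \<in> verts G"
    | x where "p = Some x" "q = None" "x \<in> verts G"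
    | x y where "p = Some x" "q = Some y" "adj G x y"
    by (cases p; cases q) (auto simp: verts_join1)
  then show "\<exists>s\<in>Some ` S. dist (join1 G) s p \<noteq> dist (join1 G) s q"
  proof cases
    case (1 x)
    then show ?thesis
      using apex[of x] by metis
  next
    case (2 x)
    then show ?thesis
      using apex[of x] by simp
  next
    case (3 x y)
    then have V: "x \<in> verts G" "y \<in> verts G"
      using adj_in_verts by auto
    then obtain s where s: "s \<in> S" "dist2 G s x \<noteq> dist2 G s y"
      using gen 3(3) unfolding local_gen_def by blast
    then have "dist (join1 G) (Some s) p \<noteq> dist (join1 G) (Some s) q"
      using 3 V SV dist_join1_Some_Some by auto
    then show ?thesis
      using s(1) by blast
  qed
qed

lemma local_gen_join1_vimage:
  assumes gen: "local_gen (dist (join1 G)) (join1 G) S"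
  shows "local_gen (dist2 G) G (Some -` S)"
  unfolding local_gen_def
proof (intro conjI ballI impI)
  have SV: "S \<subseteq> verts (join1 G)"
    using gen by (simp add: local_gen_def)
  then show "Some -` S \<subseteq> verts G"
    by (auto simp: verts_join1)
  fix x y assume x: "x \<in> verts G" and y: "y \<in> verts G" and xy: "adj G x y"
  then have "Some x \<in> verts (join1 G)" "Some y \<in> verts (join1 G)" "adj (join1 G) (Some x) (Some y)"
    by (simp_all add: verts_join1)
  then obtain s where s: "s \<in> S" "dist (join1 G) s (Some x) \<noteq> dist (join1 G) s (Some y)"
    using gen unfolding local_gen_def by blast
  moreover have "s \<noteq> None"
    using s(2) dist_join1_None_Some[OF x] dist_join1_None_Some[OF y] by metis
  ultimately obtain t where "s = Some t" "t \<in> verts G"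
    using SV by (auto simp: verts_join1)
  then show "\<exists>t\<in>Some -` S. dist2 G t x \<noteq> dist2 G t y"
    using s x y dist_join1_Some_Some by auto
qed

lemma dim_l_join1:
  assumes "no_adj_gen_in_nbhd G"
  shows "dim_l (join1 G) = adim_l G"
proof -
  obtain B where B: "local_gen (dist2 G) G B" "card B = adim_l G"
    using adim_l_attained[OF local_gen_dist2_verts] by blast
  have gen: "local_gen (dist (join1 G)) (join1 G) (Some ` B)"
    using local_gen_join1_image[OF assms B(1)] .
  obtain S where S: "local_gen (dist (join1 G)) (join1 G) S" "card S = dim_l (join1 G)"
    using dim_l_attained[OF gen] by blast
  have "finite S"
    using S(1) finite_verts finite_subset by (auto simp: local_gen_def verts_join1)
  have "adim_l G \<le> card (Some -` S)"
    using adim_l_le_card[OF local_gen_join1_vimage[OF S(1)]] .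
  also have "\<dots> \<le> card S"
    using card_vimage_inj_on_le[of Some UNIV S] \<open>finite S\<close> by simp
  finally have "adim_l G \<le> dim_l (join1 G)"
    using S(2) by simp
  moreover have "dim_l (join1 G) \<le> adim_l G"
    using dim_l_le_card[OF gen] B(2) by (simp add: card_image)
  ultimately show ?thesis
    by simp
qed

end

lemma verts_lex_prod: "verts (lex_prod G H) = Sigma (verts G) (\<lambda>u. verts (H u))"
  by (simp add: lex_prod_def)

lemma adj_lex_prod:
  "adj (lex_prod G H) (u, x) (w, y) \<longleftrightarrow>
     u \<in> verts G \<and> w \<in> verts G \<and> x \<in> verts (H u) \<and> y \<in> verts (H w) \<and>
     (adj G u w \<or> (u = w \<and> adj (H u) x y))"
  unfolding adj_def lex_prod_def by (auto simp: doubleton_eq_iff insert_commute)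

locale lex_prod_graph = connected_simple_graph G for G :: "'a graph" +
  fixes H :: "'a \<Rightarrow> 'b graph"
  assumes factor: "u \<in> verts G \<Longrightarrow> connected_simple_graph (H u)"
    and two_verts: "2 \<le> card (verts G)"
begin

abbreviation L :: "('a \<times> 'b) graph" where
  "L \<equiv> lex_prod G H"

lemma dist_lex_prod_same_factor:
  assumes v: "v \<in> verts G" and z: "z \<in> verts (H v)" and y: "y \<in> verts (H v)"
  shows "dist L (v, z) (v, y) = dist2 (H v) z y"
proof -
  interpret Hv: connected_simple_graph "H v"
    using factor[OF v] .
  define D where "D p = (if fst p = v then dist2 (H v) z (snd p) else 1)" for p :: "'a \<times> 'b"
  have lipschitz: "D q \<le> D p + 1" if "adj L p q" for p q
  proof (cases "fst p = v \<and> fst q = v")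
    case True
    then have "adj (H v) (snd p) (snd q)"
      using that adj_irrefl by (cases p; cases q) (auto simp: adj_lex_prod)
    then show ?thesis
      using True Hv.dist2_adj_le_Suc z by (simp add: D_def)
  next
    case False
    then show ?thesis
      by (auto simp: D_def dist2_def)
  qed
  obtain w where w: "adj G v w"
    using has_neighbour[OF two_verts v] .
  then have "w \<in> verts G" "w \<noteq> v"
    using adj_in_verts by auto
  then obtain y' where y': "y' \<in> verts (H w)"
    using connected_simple_graph.verts_nonempty[OF factor] by blast
  obtain xs where xs: "walk L xs" "hd xs = (v, z)" "last xs = (v, y)" "length xs = Suc (D (v, y))"
  proof -
    consider "z = y" | "z \<noteq> y" "adj (H v) z y" | "z \<noteq> y" "\<not> adj (H v) z y"
      by blast
    then show thesis
    proof cases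
      case 1
      then show thesis
        using v z Hv.dist2_eq[OF z y]
        by (intro that[of "[(v, z)]"]) (simp_all add: verts_lex_prod D_def)
    next
      case 2
      then show thesis
        using v z y Hv.dist2_eq[OF z y]
        by (intro that[of "[(v, z), (v, y)]"]) (simp_all add: verts_lex_prod adj_lex_prod D_def)
    next
      case 3
      then show thesis
        using v z y y' w \<open>w \<in> verts G\<close> \<open>w \<noteq> v\<close> Hv.dist2_eq[OF z y] adj_commute[of G v w]
        by (intro that[of "[(v, z), (w, y'), (v, y)]"]) (simp_all add: verts_lex_prod adj_lex_prod D_def)
    qed
  qed
  have "D (v, z) = 0"
    using Hv.dist2_eq[OF z z] by (simp add: D_def)
  then show ?thesis
    using dist_eqI[OF xs \<open>D (v, z) = 0\<close> lipschitz] by (simp add: D_def)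
qed

lemma dist_lex_prod_other_factor:
  assumes v: "v \<in> verts G" "z \<in> verts (H v)" and w: "w \<in> verts G" "y \<in> verts (H w)"
    and "w \<noteq> v"
  shows "dist L (v, z) (w, y) = dist G v w"
proof -
  define D where "D p = dist G v (fst p)" for p :: "'a \<times> 'b"
  have lipschitz: "D q \<le> D p + 1" if "adj L p q" for p q
    using that dist_adj_le_Suc[OF _ v(1)] by (cases p; cases q) (auto simp: adj_lex_prod D_def)
  obtain ws where ws: "walk G ws" "hd ws = v" "last ws = w" "length ws = Suc (dist G v w)"
    using shortest_walk_exists[OF v(1) w(1)] by blast
  define g where
    "g a = (a, if a = v then z else if a = w then y else (SOME t. t \<in> verts (H a)))" for a
  have "g a \<in> verts L" if "a \<in> verts G" for a
    using that v w connected_simple_graph.verts_nonempty[OF factor[OF that]]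
    by (auto simp: g_def verts_lex_prod some_in_eq)
  then have "walk L (map g ws)"
    using walk_map[OF ws(1), of g L] by (force simp: g_def verts_lex_prod adj_lex_prod)
  moreover have "ws \<noteq> []"
    using ws(1) by (simp add: walk_def)
  ultimately have "dist L (v, z) (w, y) = D (w, y)"
    using ws \<open>w \<noteq> v\<close> lipschitz v(1)
    by (intro dist_eqI[of L "map g ws"]) (simp_all add: hd_map last_map g_def D_def)
  then show ?thesis
    by (simp add: D_def)
qed

lemma local_gen_lex_prod_Sigma:
  assumes nbhd: "\<forall>u\<in>verts G. no_adj_gen_in_nbhd (H u)"
    and gen: "\<forall>u\<in>verts G. local_gen (dist2 (H u)) (H u) (B u)"
  shows "local_gen (dist L) L (Sigma (verts G) B)"
  unfolding local_gen_def
proof (intro conjI ballI impI)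
  show "Sigma (verts G) B \<subseteq> verts L"
    using gen by (auto simp: local_gen_def verts_lex_prod)
  fix p q assume "p \<in> verts L" "q \<in> verts L" and pq: "adj L p q"
  then obtain a x b y where p: "p = (a, x)" and q: "q = (b, y)"
    and V: "a \<in> verts G" "b \<in> verts G" "x \<in> verts (H a)" "y \<in> verts (H b)"
    and ab: "adj G a b \<or> (a = b \<and> adj (H a) x y)"
    by (cases p; cases q) (auto simp: adj_lex_prod)
  interpret Ha: connected_simple_graph "H a"
    using factor[OF V(1)] .
  have BV: "B a \<subseteq> verts (H a)"
    using gen V(1) by (simp add: local_gen_def)
  show "\<exists>s\<in>Sigma (verts G) B. dist L s p \<noteq> dist L s q"
  proof (cases "adj G a b")
    case True
    then have "b \<noteq> a"
      by auto
    obtain s where s: "s \<in> B a" "\<not> adj (H a) x s"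
      using nbhd gen V unfolding no_adj_gen_in_nbhd_def by blast
    then have "s \<in> verts (H a)" "\<not> adj (H a) s x"
      using BV by (auto simp: adj_commute)
    then have "dist L (a, s) p \<noteq> dist L (a, s) q"
      using dist_lex_prod_same_factor[OF V(1) _ V(3)] dist_lex_prod_other_factor[OF V(1) _ V(2,4) \<open>b \<noteq> a\<close>]
        dist_eq_1_iff[OF V(1,2)] True Ha.dist2_eq[of s x] V(3) p q
      by auto
    then show ?thesis
      using s(1) V(1) by blast
  next
    case False
    then have "b = a" "adj (H a) x y"
      using ab by auto
    then obtain s where s: "s \<in> B a" "dist2 (H a) s x \<noteq> dist2 (H a) s y"
      using gen V unfolding local_gen_def by blast
    then have "dist L (a, s) p \<noteq> dist L (a, s) q"
      using dist_lex_prod_same_factor[OF V(1)] BV V p q \<open>b = a\<close> by auto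
    then show ?thesis
      using s(1) V(1) by blast
  qed
qed

lemma local_gen_lex_prod_fibre:
  assumes gen: "local_gen (dist L) L S" and u: "u \<in> verts G"
  shows "local_gen (dist2 (H u)) (H u) {z. (u, z) \<in> S}"
  unfolding local_gen_def
proof (intro conjI ballI impI)
  have SV: "S \<subseteq> verts L"
    using gen by (simp add: local_gen_def)
  then show "{z. (u, z) \<in> S} \<subseteq> verts (H u)"
    by (auto simp: verts_lex_prod)
  fix x y assume x: "x \<in> verts (H u)" and y: "y \<in> verts (H u)" and xy: "adj (H u) x y"
  then have "adj L (u, x) (u, y)" "(u, x) \<in> verts L" "(u, y) \<in> verts L"
    using u by (simp_all add: adj_lex_prod verts_lex_prod)
  then obtain v z where s: "(v, z) \<in> S" "dist L (v, z) (u, x) \<noteq> dist L (v, z) (u, y)"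
    using gen unfolding local_gen_def by fast
  moreover have vz: "v \<in> verts G" "z \<in> verts (H v)"
    using SV s(1) by (auto simp: verts_lex_prod)
  ultimately have "v = u"
    using dist_lex_prod_other_factor[OF vz u] x y by metis
  then show "\<exists>t\<in>{z. (u, z) \<in> S}. dist2 (H u) t x \<noteq> dist2 (H u) t y"
    using s vz dist_lex_prod_same_factor u x y by auto
qed

lemma dim_l_lex_prod:
  assumes nbhd: "\<forall>u\<in>verts G. no_adj_gen_in_nbhd (H u)"
  shows "dim_l L = (\<Sum>u\<in>verts G. adim_l (H u))"
proof -
  have fin: "finite (verts (H u))" if "u \<in> verts G" for u
    using connected_simple_graph.finite_verts[OF factor[OF that]] .
  have "\<exists>B. local_gen (dist2 (H u)) (H u) B \<and> card B = adim_l (H u)" if "u \<in> verts G" for u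
    using adim_l_attained[OF connected_simple_graph.local_gen_dist2_verts[OF factor[OF that]]] .
  then obtain B where B: "\<And>u. u \<in> verts G \<Longrightarrow>
      local_gen (dist2 (H u)) (H u) (B u) \<and> card (B u) = adim_l (H u)"
    by metis
  have "finite (B u)" if "u \<in> verts G" for u
    using B[OF that] fin[OF that] finite_subset by (auto simp: local_gen_def)
  then have "card (Sigma (verts G) B) = (\<Sum>u\<in>verts G. adim_l (H u))"
    using B finite_verts by (simp add: card_SigmaI)
  moreover have genB: "local_gen (dist L) L (Sigma (verts G) B)"
    using local_gen_lex_prod_Sigma nbhd B by blast
  ultimately have le: "dim_l L \<le> (\<Sum>u\<in>verts G. adim_l (H u))"
    using dim_l_le_card by metis
  obtain S where S: "local_gen (dist L) L S" "card S = dim_l L"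
    using dim_l_attained[OF genB] by blast
  define T where "T u = {z. (u, z) \<in> S}" for u
  have "S = Sigma (verts G) T"
    using S(1) by (auto simp: local_gen_def verts_lex_prod T_def)
  have "(\<Sum>u\<in>verts G. adim_l (H u)) \<le> (\<Sum>u\<in>verts G. card (T u))"
    unfolding T_def by (intro sum_mono adim_l_le_card local_gen_lex_prod_fibre[OF S(1)])
  also have "\<dots> = card S"
  proof -
    have "finite (T u)" if "u \<in> verts G" for u
      using local_gen_lex_prod_fibre[OF S(1) that] fin[OF that] finite_subset
      by (auto simp: local_gen_def T_def)
    then show ?thesis
      using \<open>S = Sigma (verts G) T\<close> finite_verts by (simp add: card_SigmaI)
  qed
  finally show ?thesis
    using le S(2) by simp
qed

end

theorem corollary5:
  fixes G :: "'a graph" and H :: "'a \<Rightarrow> 'b graph"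
  assumes "simple_graph G" and "connected G" and "card (verts G) \<ge> 2"
    and "\<forall>u\<in>verts G. simple_graph (H u) \<and> connected (H u) \<and>
           (radius (H u) \<ge> 4 \<or> (\<not> is_tree (H u) \<and> girth (H u) \<ge> 7))"
  shows "dim_l (lex_prod G H) = (\<Sum>u\<in>verts G. dim_l (join1 (H u))) \<and>
         (\<Sum>u\<in>verts G. dim_l (join1 (H u))) = (\<Sum>u\<in>verts G. adim_l (H u))"
proof -
  interpret lex_prod_graph G H
    using assms by unfold_locales (auto simp: connected_simple_graph_def)
  have nbhd: "\<forall>u\<in>verts G. no_adj_gen_in_nbhd (H u)"
    using assms(4) factor connected_simple_graph.no_adj_gen_in_nbhdI by blast
  have "(\<Sum>u\<in>verts G. dim_l (join1 (H u))) = (\<Sum>u\<in>verts G. adim_l (H u))"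
    using nbhd factor connected_simple_graph.dim_l_join1 by (intro sum.cong) blast+
  then show ?thesis
    using dim_l_lex_prod[OF nbhd] by simp
qed

end
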